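(* Let $n\ge1$, identify $\mathbb{R}^{n+1}=\mathbb{R}^n\times\mathbb{R}$, let $f\colon\mathbb{R}^n\to(0,\infty)$ be continuous with epigraph $L=\{(x,y)\mid f(x)\le y\}$, and let $K\subset\mathbb{R}^{n+1}$ be a nonempty closed set with $K\cap L=\emptyset$ containing a point $(x_*,y_* )$ with $y_*\le 0$. Let $G^+$, $G^-$ be the upper and lower equidistant functions associated with $K$ and $L$. Then for every $x\in\mathbb{R}^n$ and $y\in\mathbb{R}$: if $y<G^-(x)$ then $d((x,y),K)<d((x,y),L)$, and if $G^+(x)<y$ then $d((x,y),K)>d((x,y),L)$.
   Context: $d(p,A)=\inf\{|p-q|\mid q\in A\}$ (Euclidean distance). The upper and lower equidistant functions are $G^+(x)=\sup\{y\in\mathbb{R}\mid d((x,y),K)=d((x,y),L)\}$ and $G^-(x)=\inf\{y\in\mathbb{R}\mid d((x,y),K)=d((x,y),L)\}$ (under the stated assumptions these sets are nonempty and bounded, so $G^\pm(x)$ are real numbers). *)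

theory Defs
  imports "HOL-Analysis.Analysis"
begin

text \<open>Points of R^(n+1) = R^n x R are pairs; the product norm is Euclidean.
  d(p,A) is infdist p A.\<close>

definition epigraph_set :: "(real^'n \<Rightarrow> real) \<Rightarrow> ((real^'n) \<times> real) set" where
  "epigraph_set f = {(x, y). f x \<le> y}"

definition equidist_set :: "((real^'n) \<times> real) set \<Rightarrow> ((real^'n) \<times> real) set \<Rightarrow> real^'n \<Rightarrow> real set" where
  "equidist_set K L x = {y. infdist (x, y) K = infdist (x, y) L}"

definition G_plus :: "((real^'n) \<times> real) set \<Rightarrow> ((real^'n) \<times> real) set \<Rightarrow> real^'n \<Rightarrow> real" where
  "G_plus K L x = Sup (equidist_set K L x)"

definition G_minus :: "((real^'n) \<times> real) set \<Rightarrow> ((real^'n) \<times> real) set \<Rightarrow> real^'n \<Rightarrow> real" where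
  "G_minus K L x = Inf (equidist_set K L x)"

end

theory Submission
  imports Defs
begin

text \<open>Far below x, the distance to K is at most that to the witness (xs, ys), about |y| + D^2/(2|y|)
  with D = dist x xs, while every point of the epigraph L is either horizontally farther than D + 1
  or, since f is bounded below by some c > 0 near x, at height at least c: so d((x,y),L) exceeds
  d((x,y),K) for y small enough. Far above, (x,y) lies in L but not in the closed set K. By the
  intermediate value theorem, the difference of the two distances keeps its sign below the
  smallest and above the largest equidistant height.\<close>

lemma less_below_Inf_crossings:
  fixes g k :: "real \<Rightarrow> real"
  assumes "continuous_on UNIV g" "continuous_on UNIV k"
    and below: "\<And>t. t \<le> a \<Longrightarrow> g t < k t"
    and "y < Inf {t. g t = k t}"
  shows "g y < k y"
proof (rule ccontr)
  let ?h = "\<lambda>t. k t - g t"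
  assume "\<not> g y < k y"
  then have "a < y" using below[of y] by force
  moreover have "continuous_on {a..y} ?h"
    using assms(1,2) by (auto intro: continuous_on_diff continuous_on_subset)
  ultimately obtain t where t: "a \<le> t" "t \<le> y" "?h t = 0"
    using IVT2'[of ?h y 0 a] below[of a] \<open>\<not> g y < k y\<close> by force
  have "a \<le> s" if "g s = k s" for s
    using below[of s] that by linarith
  then have "bdd_below {t. g t = k t}"
    by (rule bdd_belowI[of _ a]) simp
  then have "Inf {t. g t = k t} \<le> t" using t(3) by (simp add: cInf_lower)
  then show False using t(2) \<open>y < Inf {t. g t = k t}\<close> by simp
qed

lemma greater_above_Sup_crossings:
  fixes g k :: "real \<Rightarrow> real"
  assumes "continuous_on UNIV g" "continuous_on UNIV k"
    and above: "\<And>t. b \<le> t \<Longrightarrow> g t > k t"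
    and "Sup {t. g t = k t} < y"
  shows "g y > k y"
proof (rule ccontr)
  let ?h = "\<lambda>t. g t - k t"
  assume "\<not> g y > k y"
  then have "y < b" using above[of y] by force
  moreover have "continuous_on {y..b} ?h"
    using assms(1,2) by (auto intro: continuous_on_diff continuous_on_subset)
  ultimately obtain t where t: "y \<le> t" "t \<le> b" "?h t = 0"
    using IVT'[of ?h y 0 b] above[of b] \<open>\<not> g y > k y\<close> by force
  have "s \<le> b" if "g s = k s" for s
    using above[of s] that by linarith
  then have "bdd_above {t. g t = k t}"
    by (rule bdd_aboveI[of _ b]) simp
  then have "t \<le> Sup {t. g t = k t}" using t(3) by (simp add: cSup_upper)
  then show False using t(1) \<open>Sup {t. g t = k t} < y\<close> by simp
qed

lemma continuous_pos_bounded_below_on_cball: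
  fixes f :: "'a::heine_borel \<Rightarrow> real"
  assumes "continuous_on UNIV f" and "\<And>w. f w > 0" and "0 \<le> R"
  obtains c where "c > 0" and "\<And>w. dist x w \<le> R \<Longrightarrow> c \<le> f w"
proof -
  have "\<exists>z\<in>cball x R. \<forall>w\<in>cball x R. f z \<le> f w"
    using assms by (intro continuous_attains_inf) (auto intro: continuous_on_subset)
  then obtain z where "\<And>w. dist x w \<le> R \<Longrightarrow> f z \<le> f w"
    by (metis mem_cball)
  then show thesis
    using that assms(2) by blast
qed

lemma infdist_epigraph_ge:
  fixes f :: "real^'n \<Rightarrow> real"
  assumes pos: "\<And>w. f w > 0" and lower: "\<And>w. dist x w \<le> R \<Longrightarrow> c \<le> f w"
    and "0 \<le> R" and "y \<le> 0"
  shows "min (c - y) (sqrt (R^2 + y^2)) \<le> infdist (x, y) (epigraph_set f)"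
proof -
  have "min (c - y) (sqrt (R^2 + y^2)) \<le> dist (x, y) (x', y')" if "f x' \<le> y'" for x' y'
  proof (cases "dist x x' \<le> R")
    case True
    then have "c - y \<le> dist y y'"
      using lower[of x'] that by (simp add: dist_real_def)
    also have "\<dots> \<le> dist (x, y) (x', y')"
      by (simp add: dist_Pair_Pair)
    finally show ?thesis by simp
  next
    case False
    have "R^2 \<le> (dist x x')^2"
      using False \<open>0 \<le> R\<close> by (simp add: power_mono)
    moreover have "y^2 \<le> (dist y y')^2"
      using pos[of x'] that \<open>y \<le> 0\<close> by (simp add: dist_real_def abs_le_square_iff[symmetric])
    ultimately have "sqrt (R^2 + y^2) \<le> dist (x, y) (x', y')"
      unfolding dist_Pair_Pair by (intro real_sqrt_le_mono add_mono)
    then show ?thesis by simp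
  qed
  moreover have "epigraph_set f \<noteq> {}"
    by (auto simp: epigraph_set_def)
  ultimately show ?thesis
    by (auto simp: infdist_notempty epigraph_set_def intro!: cINF_greatest)
qed

lemma eventually_infdist_less_epigraph_at_bot:
  fixes f :: "real^'n \<Rightarrow> real"
  assumes "continuous_on UNIV f" and pos: "\<And>w. f w > 0"
    and "(xs, ys) \<in> K" and "ys \<le> 0"
  shows "\<forall>\<^sub>F y in at_bot. infdist (x, y) K < infdist (x, y) (epigraph_set f)"
proof -
  define D where "D = dist x xs"
  have "0 \<le> D + 1" by (simp add: D_def)
  then obtain c where "c > 0" and c: "\<And>w. dist x w \<le> D + 1 \<Longrightarrow> c \<le> f w"
    using continuous_pos_bounded_below_on_cball assms(1,2) by metis
  have "infdist (x, y) K < infdist (x, y) (epigraph_set f)"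
    if "y \<le> ys" and y: "y \<le> - (D^2) / (2*c)" for y
  proof -
    have "y \<le> 0" using \<open>y \<le> ys\<close> \<open>ys \<le> 0\<close> by simp
    have "D^2 \<le> - 2 * c * y"
      using y \<open>c > 0\<close> by (simp add: field_simps)
    moreover have "(c - y)^2 = c^2 - 2 * c * y + y^2"
      by (simp add: power2_eq_square algebra_simps)
    moreover have "0 < c^2"
      using \<open>c > 0\<close> by simp
    ultimately have "D^2 + y^2 < (c - y)^2"
      by linarith
    then have closer: "sqrt (D^2 + y^2) < c - y"
      using \<open>c > 0\<close> \<open>y \<le> 0\<close> by (simp add: real_less_lsqrt)
    have "infdist (x, y) K \<le> dist (x, y) (xs, ys)"
      using assms(3) by (rule infdist_le)
    also have "\<dots> = sqrt (D^2 + (y - ys)^2)"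
      by (simp add: dist_Pair_Pair D_def dist_real_def)
    also have "\<dots> \<le> sqrt (D^2 + y^2)"
      using \<open>y \<le> ys\<close> \<open>ys \<le> 0\<close> by (simp add: abs_le_square_iff[symmetric])
    also have "\<dots> < min (c - y) (sqrt ((D + 1)^2 + y^2))"
      using closer by (simp add: D_def power_strict_mono)
    also have "\<dots> \<le> infdist (x, y) (epigraph_set f)"
      using infdist_epigraph_ge[OF pos c \<open>0 \<le> D + 1\<close> \<open>y \<le> 0\<close>] .
    finally show ?thesis .
  qed
  then show ?thesis
    by (auto intro: eventually_at_bot_linorderI[of "min ys (- (D^2) / (2*c))"])
qed

theorem corollary1:
  fixes f :: "real^'n \<Rightarrow> real" and K :: "((real^'n) \<times> real) set"
    and xs :: "real^'n" and ys :: real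
  assumes "continuous_on UNIV f"
    and "\<And>x. f x > 0"
    and "closed K" and "K \<noteq> {}"
    and "K \<inter> epigraph_set f = {}"
    and "(xs, ys) \<in> K" and "ys \<le> 0"
  shows "\<forall>x y. (y < G_minus K (epigraph_set f) x
                   \<longrightarrow> infdist (x, y) K < infdist (x, y) (epigraph_set f))
             \<and> (G_plus K (epigraph_set f) x < y
                   \<longrightarrow> infdist (x, y) K > infdist (x, y) (epigraph_set f))"
proof (intro allI)
  fix x :: "real^'n" and y :: real
  let ?dK = "\<lambda>t. infdist (x, t) K" and ?dL = "\<lambda>t. infdist (x, t) (epigraph_set f)"
  have cont: "continuous_on UNIV ?dK" "continuous_on UNIV ?dL"
    by (intro continuous_intros)+
  obtain a where below: "\<And>t. t \<le> a \<Longrightarrow> ?dK t < ?dL t"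
    using eventually_infdist_less_epigraph_at_bot[OF assms(1,2,6,7), of x]
    by (auto simp: eventually_at_bot_linorder)
  have above: "?dK t > ?dL t" if "f x \<le> t" for t
  proof -
    have "(x, t) \<in> epigraph_set f"
      using that by (simp add: epigraph_set_def)
    then show ?thesis
      using assms(5) infdist_pos_not_in_closed[OF assms(3,4)] by auto
  qed
  show "(y < G_minus K (epigraph_set f) x \<longrightarrow> ?dK y < ?dL y)
      \<and> (G_plus K (epigraph_set f) x < y \<longrightarrow> ?dK y > ?dL y)"
    unfolding G_minus_def G_plus_def equidist_set_def
    using less_below_Inf_crossings[OF cont below] greater_above_Sup_crossings[OF cont above]
    by blast
qed

end
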